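(* Let $m\ge 3$, let $C$ be a set of $m$ candidates, and let $T$ be the set of all $m!$ strict rankings (linear orders) of $C$. Let $w=(w_1,\dots,w_m)$ satisfy $1=w_1\ge w_2\ge\cdots\ge w_m=0$, and for $t\in T$, $\alpha\in C$ let $\sigma_t(\alpha)=w_i$, where $i$ is the position of $\alpha$ in the ranking $t$. Suppose $n$ voters each independently choose a ranking uniformly at random from $T$ (Impartial Culture), let $N_t$ be the number of voters choosing $t$, let $|\alpha|=\sum_{t\in T}N_t\sigma_t(\alpha)$ be the score of $\alpha$, and let $S=(|\alpha|)_{\alpha\in C}$. Let $\bar w=(w_1+\cdots+w_m)/m$ and $\sigma_w^2=(w_1^2+\cdots+w_m^2)/m-\bar w^2$. Then, as $n\to\infty$, $$\frac{S-n\bar w\mathbf{1}}{\sqrt n}\ \xrightarrow{d}\ \sigma_w\left(\frac{m}{m-1}\right)^{1/2}\bigl(Z-\bar Z\mathbf{1}\bigr),$$ where $\mathbf 1$ is the all-ones vector indexed by $C$, $Z=(Z_\alpha)_{\alpha\in C}$ is a vector of independent standard normal random variables, $\bar Z=\frac1m\sum_{\alpha\in C}Z_\alpha$, and $\xrightarrow{d}$ denotes convergence in distribution. *)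

theory Defs
  imports "HOL-Probability.Probability"
begin

text \<open>Candidates are the elements of a finite type 'c, with m = CARD('c).
  A strict ranking t is encoded by its position function: t alpha is the
  position (in 1..m) of candidate alpha; t must be a bijection onto 1..m.\<close>

definition rankings :: "('c::finite \<Rightarrow> nat) set" where
  "rankings = {t. bij_betw t UNIV {1..CARD('c)}}"

definition sigma :: "(nat \<Rightarrow> real) \<Rightarrow> ('c \<Rightarrow> nat) \<Rightarrow> 'c \<Rightarrow> real" where
  "sigma w t \<alpha> = w (t \<alpha>)"

definition IC_profile :: "nat \<Rightarrow> (nat \<Rightarrow> ('c::finite \<Rightarrow> nat)) pmf" where
  "IC_profile n = Pi_pmf {..<n} undefined (\<lambda>_. pmf_of_set rankings)"

definition N_count :: "nat \<Rightarrow> (nat \<Rightarrow> ('c \<Rightarrow> nat)) \<Rightarrow> ('c \<Rightarrow> nat) \<Rightarrow> nat" where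
  "N_count n p t = card {i. i < n \<and> p i = t}"

definition score :: "(nat \<Rightarrow> real) \<Rightarrow> nat \<Rightarrow> (nat \<Rightarrow> ('c::finite \<Rightarrow> nat)) \<Rightarrow> real ^ 'c" where
  "score w n p = (\<chi> \<alpha>. \<Sum>t\<in>rankings. real (N_count n p t) * sigma w t \<alpha>)"

definition wbar :: "(nat \<Rightarrow> real) \<Rightarrow> nat \<Rightarrow> real" where
  "wbar w m = (\<Sum>i=1..m. w i) / real m"

definition var_w :: "(nat \<Rightarrow> real) \<Rightarrow> nat \<Rightarrow> real" where
  "var_w w m = (\<Sum>i=1..m. (w i)\<^sup>2) / real m - (wbar w m)\<^sup>2"

definition ones :: "real ^ 'c" where
  "ones = (\<chi> \<alpha>. 1)"

definition scaled_score_law :: "(nat \<Rightarrow> real) \<Rightarrow> nat \<Rightarrow> (real ^ 'c::finite) measure" where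
  "scaled_score_law w n =
     measure_pmf (map_pmf
       (\<lambda>p. (1 / sqrt (real n)) *\<^sub>R (score w n p - (real n * wbar w CARD('c)) *\<^sub>R ones))
       (IC_profile n))"

definition std_normal_vec :: "('c::finite \<Rightarrow> real) measure" where
  "std_normal_vec = (\<Pi>\<^sub>M \<alpha>\<in>UNIV. density lborel std_normal_density)"

definition limit_law :: "(nat \<Rightarrow> real) \<Rightarrow> (real ^ 'c::finite) measure" where
  "limit_law w =
     distr std_normal_vec borel
       (\<lambda>Z. (sqrt (var_w w CARD('c)) * sqrt (real CARD('c) / (real CARD('c) - 1))) *\<^sub>R
             ((\<chi> \<alpha>. Z \<alpha>) - ((\<Sum>\<beta>\<in>UNIV. Z \<beta>) / real CARD('c)) *\<^sub>R ones))"

definition conv_in_distr :: "(nat \<Rightarrow> 'a::topological_space measure) \<Rightarrow> 'a measure \<Rightarrow> bool" where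
  "conv_in_distr M L \<longleftrightarrow>
     (\<forall>f :: 'a \<Rightarrow> real. continuous_on UNIV f \<and> (\<exists>B. \<forall>x. \<bar>f x\<bar> \<le> B) \<longrightarrow>
        (\<lambda>n. integral\<^sup>L (M n) f) \<longlonglongrightarrow> integral\<^sup>L L f)"

end

theory Submission
  imports Defs
begin

text \<open>By the multivariate Levy continuity theorem it suffices that, for every u, the
  characteristic function at u of the scaled score converges to that of the limit law.
  Now u \<bullet> (S - n wbar 1) is the sum over the voters of n independent copies of
  u \<bullet> (sigma_t - wbar 1), with t uniform on the rankings. Invariance of the uniform ranking
  under transpositions of candidates shows that this variable has mean 0 and variance
  sigma_w^2 m/(m-1) |u - ubar 1|^2, so the one-dimensional estimate behind the central limit
  theorem makes the characteristic functions converge to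
  exp (- sigma_w^2 m/(m-1) |u - ubar 1|^2 / 2), the characteristic function of
  sigma_w (m/(m-1))^(1/2) (Z - Zbar 1).

  The multivariate Levy continuity theorem is reduced to the one-dimensional one: integrals of
  bounded continuous ridge functions g (u \<bullet> x) converge, hence so do those of trigonometric
  polynomials; by Stone-Weierstrass these approximate a bounded continuous function on a cube,
  and tail ramps, again ridge functions, bound the mass outside the cube uniformly in n.\<close>

section \<open>Levy continuity theorem for random vectors\<close>

text \<open>Only an inclusion of sigma-algebras is required, so that laws given by a pmf, on which
  every set is measurable, qualify.\<close>

locale borel_prob_space = prob_space M for M :: "'a::topological_space measure" +
  assumes borel_subset_sets: "sets borel \<subseteq> sets M"
    and space_eq_UNIV: "space M = UNIV"
begin

lemma borel_measurable_from_borel: "f \<in> borel_measurable borel \<Longrightarrow> f \<in> borel_measurable M"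
  using borel_subset_sets space_eq_UNIV unfolding measurable_def by auto

lemma borel_measurable_continuous: "continuous_on UNIV f \<Longrightarrow> f \<in> borel_measurable M"
  by (intro borel_measurable_from_borel borel_measurable_continuous_onI)

lemma integrable_bounded_continuous:
  fixes f :: "'a \<Rightarrow> real"
  assumes "continuous_on UNIV f" "\<And>x. \<bar>f x\<bar> \<le> B"
  shows "integrable M f"
  using assms by (intro integrable_const_bound[of _ B] borel_measurable_continuous) auto

end

lemma borel_prob_space_measure_pmf: "borel_prob_space (measure_pmf p)"
  by unfold_locales auto

lemma (in prob_space) borel_prob_space_distr:
  "f \<in> borel_measurable M \<Longrightarrow> borel_prob_space (distr M borel f)"
  by (intro borel_prob_space.intro prob_space_distr) (auto simp: borel_prob_space_axioms_def)

definition char_vec :: "'a::real_inner measure \<Rightarrow> 'a \<Rightarrow> complex" where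
  "char_vec M u = (CLINT x|M. iexp (u \<bullet> x))"

lemma integral_inner_tendsto:
  fixes M :: "nat \<Rightarrow> 'a::real_inner measure" and g :: "real \<Rightarrow> real"
  assumes M: "\<And>n. borel_prob_space (M n)" and L: "borel_prob_space L"
    and char_conv: "\<And>u. (\<lambda>n. char_vec (M n) u) \<longlonglongrightarrow> char_vec L u"
    and g: "\<And>t. isCont g t" "\<And>t. norm (g t) \<le> B"
  shows "(\<lambda>n. \<integral>x. g (u \<bullet> x) \<partial>M n) \<longlonglongrightarrow> (\<integral>x. g (u \<bullet> x) \<partial>L)"
proof -
  have u_borel: "(\<lambda>x::'a. u \<bullet> x) \<in> borel_measurable borel"
    by (intro borel_measurable_continuous_onI continuous_intros)
  have u_M: "(\<lambda>x. u \<bullet> x) \<in> borel_measurable (M n)" for n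
    using borel_prob_space.borel_measurable_from_borel[OF M u_borel] .
  have u_L: "(\<lambda>x. u \<bullet> x) \<in> borel_measurable L"
    using borel_prob_space.borel_measurable_from_borel[OF L u_borel] .
  define \<mu> where "\<mu> n = distr (M n) borel (\<lambda>x. u \<bullet> x)" for n
  define \<nu> where "\<nu> = distr L borel (\<lambda>x. u \<bullet> x)"
  have \<mu>: "real_distribution (\<mu> n)" for n
    unfolding \<mu>_def using M u_M
    by (intro prob_space.real_distribution_distr) (auto dest: borel_prob_space.axioms)
  have \<nu>: "real_distribution \<nu>"
    unfolding \<nu>_def using L u_L
    by (intro prob_space.real_distribution_distr) (auto dest: borel_prob_space.axioms)
  have "char (\<mu> n) t = char_vec (M n) (t *\<^sub>R u)" "char \<nu> t = char_vec L (t *\<^sub>R u)" for n t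
    unfolding \<mu>_def \<nu>_def char_def char_vec_def
    by (simp_all add: integral_distr[OF u_M] integral_distr[OF u_L])
  then have "weak_conv_m \<mu> \<nu>"
    using char_conv by (intro levy_continuity[OF \<mu> \<nu>]) simp
  then have "(\<lambda>n. integral\<^sup>L (\<mu> n) g) \<longlonglongrightarrow> integral\<^sup>L \<nu> g"
    by (rule weak_conv_imp_integral_bdd_continuous_conv[OF \<mu> \<nu> _ g])
  moreover have "g \<in> borel_measurable borel"
    using g by (intro borel_measurable_continuous_onI continuous_at_imp_continuous_on) auto
  ultimately show ?thesis
    unfolding \<mu>_def \<nu>_def by (simp add: integral_distr[OF u_M] integral_distr[OF u_L])
qed

inductive trig_poly :: "('a::real_inner \<Rightarrow> real) \<Rightarrow> bool" where
  cos: "trig_poly (\<lambda>x. cos (u \<bullet> x + c))"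
| add: "trig_poly f \<Longrightarrow> trig_poly g \<Longrightarrow> trig_poly (\<lambda>x. f x + g x)"
| scale: "trig_poly f \<Longrightarrow> trig_poly (\<lambda>x. a * f x)"

lemma trig_poly_cong: "trig_poly f \<Longrightarrow> (\<And>x. f x = g x) \<Longrightarrow> trig_poly g"
  by (metis ext)

lemma trig_poly_const: "trig_poly (\<lambda>x. c)"
  by (rule trig_poly_cong[OF trig_poly.scale[OF trig_poly.cos[of 0 0], of c]]) simp

lemma trig_poly_cos_mult:
  assumes "trig_poly g"
  shows "trig_poly (\<lambda>x. cos (u \<bullet> x + c) * g x)"
  using assms
proof induction
  case (cos v d)
  have "trig_poly (\<lambda>x. (1/2) * (cos ((u - v) \<bullet> x + (c - d)) + cos ((u + v) \<bullet> x + (c + d))))"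
    by (intro trig_poly.intros)
  then show ?case
    by (rule trig_poly_cong) (simp add: cos_times_cos algebra_simps)
next
  case (add f g)
  then show ?case
    using trig_poly.add[OF add.IH] by (simp add: algebra_simps)
next
  case (scale f a)
  then show ?case
    using trig_poly.scale[OF scale.IH, of a] by (simp add: algebra_simps)
qed

lemma trig_poly_mult:
  assumes "trig_poly f" "trig_poly g"
  shows "trig_poly (\<lambda>x. f x * g x)"
  using assms
proof induction
  case (cos u c)
  then show ?case by (rule trig_poly_cos_mult)
next
  case (add f1 f2)
  then show ?case
    using trig_poly.add[OF add.IH] by (simp add: algebra_simps)
next
  case (scale f a)
  then show ?case
    using trig_poly.scale[OF scale.IH, of a] by (simp add: algebra_simps)
qed

lemma trig_poly_bounded_continuous:
  assumes "trig_poly f"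
  shows "continuous_on UNIV f \<and> (\<exists>B. \<forall>x. \<bar>f x\<bar> \<le> B)"
  using assms
proof induction
  case (cos u c)
  have "\<forall>x. \<bar>cos (u \<bullet> x + c)\<bar> \<le> 1" by simp
  moreover have "continuous_on UNIV (\<lambda>x. cos (u \<bullet> x + c))" by (intro continuous_intros)
  ultimately show ?case by blast
next
  case (add f g)
  then obtain B1 B2 where "\<forall>x. \<bar>f x\<bar> \<le> B1" "\<forall>x. \<bar>g x\<bar> \<le> B2" by auto
  then have "\<forall>x. \<bar>f x + g x\<bar> \<le> B1 + B2" by (metis abs_triangle_ineq add_mono order_trans)
  with add show ?case by (blast intro: continuous_on_add)
next
  case (scale f a)
  then obtain B where "\<forall>x. \<bar>f x\<bar> \<le> B" by auto
  then have "\<forall>x. \<bar>a * f x\<bar> \<le> \<bar>a\<bar> * B" by (simp add: abs_mult mult_left_mono)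
  with scale show ?case by (blast intro: continuous_on_mult_left)
qed


definition sin_chart :: "real \<Rightarrow> 'a::euclidean_space \<Rightarrow> 'a" where
  "sin_chart R x = (\<Sum>b\<in>Basis. sin (x \<bullet> b / R) *\<^sub>R b)"

lemma inner_sin_chart: "b \<in> Basis \<Longrightarrow> sin_chart R x \<bullet> b = sin (x \<bullet> b / R)"
  by (simp add: sin_chart_def inner_sum_left inner_Basis if_distrib cong: if_cong)

lemma trig_poly_approx_sin_chart:
  fixes h :: "'a::euclidean_space \<Rightarrow> real"
  assumes "continuous_on (cbox (- One) One) h" and "e > 0"
  obtains \<tau> where "trig_poly \<tau>" "\<And>x. \<bar>h (sin_chart R x) - \<tau> x\<bar> < e"
proof -
  define P where
    "P g \<longleftrightarrow> continuous_on (cbox (- One) One) g \<and> (\<exists>\<tau>. trig_poly \<tau> \<and> (\<forall>x. g (sin_chart R x) = \<tau> x))"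
    for g :: "'a \<Rightarrow> real"
  have "\<exists>g. P g \<and> (\<forall>s\<in>cbox (- One) One. \<bar>h s - g s\<bar> < e)"
  proof (rule Stone_Weierstrass_HOL[where P = P])
    show "P (\<lambda>x. c)" for c
      unfolding P_def using trig_poly_const by auto
    show "P (\<lambda>x. g1 x + g2 x)" if "P g1 \<and> P g2" for g1 g2
      using that unfolding P_def by (auto intro!: continuous_intros trig_poly.add)
    show "P (\<lambda>x. g1 x * g2 x)" if "P g1 \<and> P g2" for g1 g2
      using that unfolding P_def by (auto intro!: continuous_intros trig_poly_mult)
    show "\<exists>g. P g \<and> g x \<noteq> g y" if "x \<in> cbox (- One) One \<and> y \<in> cbox (- One) One \<and> x \<noteq> y" for x y
    proof -
      from that obtain b where b: "b \<in> Basis" "x \<bullet> b \<noteq> y \<bullet> b" by (metis euclidean_eqI)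
      have "trig_poly (\<lambda>z. sin_chart R z \<bullet> b)"
        by (rule trig_poly_cong[OF trig_poly.cos[of "(1/R) *\<^sub>R b" "- (pi/2)"]])
          (simp add: inner_sin_chart[OF b(1)] cos_diff inner_commute[of b])
      then have "P (\<lambda>s. s \<bullet> b)"
        unfolding P_def by (auto intro!: continuous_intros)
      with b show ?thesis by blast
    qed
  qed (use assms in \<open>auto simp: P_def\<close>)
  then obtain g \<tau> where g: "\<forall>s\<in>cbox (- One) One. \<bar>h s - g s\<bar> < e"
    and \<tau>: "trig_poly \<tau>" "\<forall>x. g (sin_chart R x) = \<tau> x"
    unfolding P_def by auto
  have "sin_chart R x \<in> cbox (- One) One" for x
    by (auto simp: mem_box inner_sin_chart)
  with g \<tau> that show ?thesis by metis
qed

text \<open>On the cube of radius R the chart is inverted coordinatewise by R arcsin, since there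
  the arguments of sin lie in [-1, 1], within [-pi/2, pi/2].\<close>

lemma trig_poly_approx:
  fixes f :: "'a::euclidean_space \<Rightarrow> real"
  assumes f: "continuous_on UNIV f" "\<And>x. \<bar>f x\<bar> \<le> B" and "R > 0" and "e > 0"
  obtains \<tau> where "trig_poly \<tau>" "\<And>x. \<forall>b\<in>Basis. \<bar>x \<bullet> b\<bar> \<le> R \<Longrightarrow> \<bar>f x - \<tau> x\<bar> < e"
    "\<And>x. \<bar>\<tau> x\<bar> \<le> B + e"
proof -
  define clip :: "real \<Rightarrow> real" where "clip t = max (-1) (min 1 t)" for t
  define h :: "'a \<Rightarrow> real" where "h s = f (\<Sum>b\<in>Basis. (R * arcsin (clip (s \<bullet> b))) *\<^sub>R b)" for s
  have "continuous_on UNIV (\<lambda>s::'a. \<Sum>b\<in>Basis. (R * arcsin (clip (s \<bullet> b))) *\<^sub>R b)"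
    unfolding clip_def by (intro continuous_intros) auto
  then have "continuous_on (cbox (- One) One) h"
    unfolding h_def using continuous_on_compose2[OF f(1)] continuous_on_subset by blast
  then obtain \<tau> where \<tau>: "trig_poly \<tau>" and close: "\<And>x. \<bar>h (sin_chart R x) - \<tau> x\<bar> < e"
    using trig_poly_approx_sin_chart \<open>e > 0\<close> by blast
  have inverse: "h (sin_chart R x) = f x" if "\<forall>b\<in>Basis. \<bar>x \<bullet> b\<bar> \<le> R" for x
  proof -
    have "R * arcsin (clip (sin_chart R x \<bullet> b)) = x \<bullet> b" if "b \<in> Basis" for b
    proof -
      have "\<bar>x \<bullet> b / R\<bar> \<le> 1"
        using \<open>\<forall>b\<in>Basis. \<bar>x \<bullet> b\<bar> \<le> R\<close> that \<open>R > 0\<close> by (simp add: abs_divide)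
      then have "arcsin (sin (x \<bullet> b / R)) = x \<bullet> b / R"
        using pi_ge_two by (intro arcsin_sin) linarith+
      then show ?thesis
        using that \<open>R > 0\<close> by (simp add: inner_sin_chart clip_def)
    qed
    then show ?thesis
      unfolding h_def by (simp add: euclidean_representation cong: sum.cong)
  qed
  have bounded: "\<bar>h (sin_chart R x)\<bar> \<le> B" for x
    unfolding h_def by (rule f(2))
  have "\<bar>\<tau> x\<bar> \<le> B + e" for x
    using close[of x] bounded[of x] by arith
  moreover have "\<bar>f x - \<tau> x\<bar> < e" if "\<forall>b\<in>Basis. \<bar>x \<bullet> b\<bar> \<le> R" for x
    using close[of x] inverse[OF that] by simp
  ultimately show ?thesis
    using \<tau> that by blast
qed

definition tail_ramp :: "real \<Rightarrow> real \<Rightarrow> real" where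
  "tail_ramp R t = min 1 (max 0 (\<bar>t\<bar> - R + 1))"

lemma isCont_tail_ramp: "isCont (tail_ramp R) t"
  unfolding tail_ramp_def by (intro continuous_intros)

lemma tail_ramp_bounds: "0 \<le> tail_ramp R t" "tail_ramp R t \<le> 1"
  unfolding tail_ramp_def by auto

lemma tail_ramp_eq_1: "R < \<bar>t\<bar> \<Longrightarrow> tail_ramp R t = 1"
  unfolding tail_ramp_def by simp

lemma continuous_tail_ramp_inner: "continuous_on UNIV (\<lambda>x. tail_ramp R (x \<bullet> b))"
  unfolding tail_ramp_def by (intro continuous_intros)

lemma trig_poly_approx_tail:
  fixes f :: "'a::euclidean_space \<Rightarrow> real"
  assumes f: "continuous_on UNIV f" "\<And>x. \<bar>f x\<bar> \<le> B" and "R > 0" "d > 0"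
  obtains \<tau> where "trig_poly \<tau>" "\<And>x. \<bar>\<tau> x\<bar> \<le> B + d"
    "\<And>x. \<bar>f x - \<tau> x\<bar> \<le> d + 2 * B * (\<Sum>b\<in>Basis. tail_ramp R (x \<bullet> b))"
proof -
  obtain \<tau> where \<tau>: "trig_poly \<tau>" "\<And>x. \<bar>\<tau> x\<bar> \<le> B + d"
    and cube: "\<And>x. \<forall>b\<in>Basis. \<bar>x \<bullet> b\<bar> \<le> R \<Longrightarrow> \<bar>f x - \<tau> x\<bar> < d"
    using trig_poly_approx[OF f \<open>R > 0\<close> \<open>d > 0\<close>] by metis
  have "B \<ge> 0" using f(2)[of 0] by linarith
  have "\<bar>f x - \<tau> x\<bar> \<le> d + 2 * B * (\<Sum>b\<in>Basis. tail_ramp R (x \<bullet> b))" for x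
  proof (cases "\<forall>b\<in>Basis. \<bar>x \<bullet> b\<bar> \<le> R")
    case True
    have "0 \<le> 2 * B * (\<Sum>b\<in>Basis. tail_ramp R (x \<bullet> b))"
      using \<open>B \<ge> 0\<close> by (intro mult_nonneg_nonneg sum_nonneg) (auto simp: tail_ramp_bounds)
    with cube[OF True] show ?thesis by linarith
  next
    case False
    then obtain b where "b \<in> Basis" "R < \<bar>x \<bullet> b\<bar>" by (auto simp: not_le)
    then have "1 \<le> (\<Sum>b\<in>Basis. tail_ramp R (x \<bullet> b))"
      using member_le_sum[of b Basis "\<lambda>b. tail_ramp R (x \<bullet> b)"]
      by (simp add: tail_ramp_eq_1 tail_ramp_bounds)
    then have "2 * B \<le> 2 * B * (\<Sum>b\<in>Basis. tail_ramp R (x \<bullet> b))"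
      using mult_left_mono[of 1 _ "2 * B"] \<open>B \<ge> 0\<close> by simp
    moreover have "\<bar>f x - \<tau> x\<bar> \<le> B + (B + d)"
      using f(2)[of x] \<tau>(2)[of x] by linarith
    ultimately show ?thesis by linarith
  qed
  with \<tau> that show ?thesis by blast
qed

lemma abs_integral_diff_le_tail:
  fixes f g :: "'a::euclidean_space \<Rightarrow> real"
  assumes N: "borel_prob_space N"
    and f: "continuous_on UNIV f" "\<And>x. \<bar>f x\<bar> \<le> B1"
    and g: "continuous_on UNIV g" "\<And>x. \<bar>g x\<bar> \<le> B2"
    and diff: "\<And>x. \<bar>f x - g x\<bar> \<le> d + C * (\<Sum>b\<in>Basis. tail_ramp R (x \<bullet> b))"
  shows "\<bar>(\<integral>x. f x \<partial>N) - (\<integral>x. g x \<partial>N)\<bar> \<le> d + C * (\<Sum>b\<in>Basis. \<integral>x. tail_ramp R (x \<bullet> b) \<partial>N)"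
proof -
  interpret borel_prob_space N by fact
  have [simp]: "integrable N f" "integrable N g"
    using integrable_bounded_continuous f g by blast+
  have tail [simp]: "integrable N (\<lambda>x. tail_ramp R (x \<bullet> b))" for b
    using tail_ramp_bounds[of R]
    by (intro integrable_bounded_continuous[of _ 1] continuous_tail_ramp_inner)
      (simp add: abs_le_iff)
  have "\<bar>(\<integral>x. f x \<partial>N) - (\<integral>x. g x \<partial>N)\<bar> = \<bar>\<integral>x. f x - g x \<partial>N\<bar>"
    by simp
  also have "\<dots> \<le> (\<integral>x. d + C * (\<Sum>b\<in>Basis. tail_ramp R (x \<bullet> b)) \<partial>N)"
    using diff by (intro integral_abs_bound_integral) auto
  also have "\<dots> = d + C * (\<Sum>b\<in>Basis. \<integral>x. tail_ramp R (x \<bullet> b) \<partial>N)"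
    by (simp add: prob_space)
  finally show ?thesis .
qed

lemma tail_integral_tendsto_0:
  assumes "borel_prob_space (N :: 'a::euclidean_space measure)"
  shows "((\<lambda>R. \<Sum>b\<in>Basis. \<integral>x. tail_ramp R (x \<bullet> b) \<partial>N) \<longlongrightarrow> 0) at_top"
proof -
  interpret borel_prob_space N by fact
  have "((\<lambda>R. \<integral>x. tail_ramp R (x \<bullet> b) \<partial>N) \<longlongrightarrow> (\<integral>x. 0 \<partial>N)) at_top" for b
  proof (rule integral_dominated_convergence_at_top[where w = "\<lambda>_. 1"])
    show "AE x in N. ((\<lambda>R. tail_ramp R (x \<bullet> b)) \<longlongrightarrow> 0) at_top"
    proof (rule AE_I2)
      fix x
      have "\<forall>\<^sub>F R in at_top. tail_ramp R (x \<bullet> b) = 0"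
        using eventually_ge_at_top[of "\<bar>x \<bullet> b\<bar> + 1"]
        by eventually_elim (simp add: tail_ramp_def)
      then show "((\<lambda>R. tail_ramp R (x \<bullet> b)) \<longlongrightarrow> 0) at_top"
        by (rule tendsto_eventually)
    qed
  qed (auto simp: tail_ramp_bounds abs_le_iff
      intro!: borel_measurable_continuous continuous_tail_ramp_inner)
  then show ?thesis
    using tendsto_sum[of Basis "\<lambda>b R. \<integral>x. tail_ramp R (x \<bullet> b) \<partial>N" "\<lambda>_. 0"] by simp
qed

context
  fixes M :: "nat \<Rightarrow> 'a::euclidean_space measure" and L :: "'a measure"
  assumes M: "\<And>n. borel_prob_space (M n)" and L: "borel_prob_space L"
    and char_conv: "\<And>u. (\<lambda>n. char_vec (M n) u) \<longlonglongrightarrow> char_vec L u"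
begin

lemma integral_trig_poly_tendsto:
  "trig_poly \<tau> \<Longrightarrow> (\<lambda>n. \<integral>x. \<tau> x \<partial>M n) \<longlonglongrightarrow> (\<integral>x. \<tau> x \<partial>L)"
proof (induction rule: trig_poly.induct)
  case (cos u c)
  show ?case
    by (rule integral_inner_tendsto[OF M L char_conv, of "\<lambda>t. cos (t + c)" 1])
      (auto intro: continuous_intros)
next
  case (add f g)
  have "integrable N f" "integrable N g" if "borel_prob_space N" for N
    using trig_poly_bounded_continuous[OF add.hyps(1)] trig_poly_bounded_continuous[OF add.hyps(2)]
      borel_prob_space.integrable_bounded_continuous[OF that] by blast+
  then show ?case
    using tendsto_add[OF add.IH] M L by simp
next
  case (scale f a)
  then show ?case by (simp add: tendsto_mult_left)
qed

lemma tail_integral_tendsto: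
  "(\<lambda>n. \<Sum>b\<in>Basis. \<integral>x. tail_ramp R (x \<bullet> b) \<partial>M n) \<longlonglongrightarrow> (\<Sum>b\<in>Basis. \<integral>x. tail_ramp R (x \<bullet> b) \<partial>L)"
proof (intro tendsto_sum)
  fix b :: 'a
  show "(\<lambda>n. \<integral>x. tail_ramp R (x \<bullet> b) \<partial>M n) \<longlonglongrightarrow> (\<integral>x. tail_ramp R (x \<bullet> b) \<partial>L)"
    using integral_inner_tendsto[OF M L char_conv isCont_tail_ramp, of R 1 b] tail_ramp_bounds[of R]
    by (simp add: inner_commute)
qed

text \<open>f is replaced by a trigonometric polynomial up to an error bounded by tail ramps outside a
  large cube; both are combinations of ridge functions, whose integrals converge.\<close>

theorem levy_continuity_multivariate: "conv_in_distr M L"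
  unfolding conv_in_distr_def
proof (intro allI impI)
  fix f :: "'a \<Rightarrow> real"
  assume "continuous_on UNIV f \<and> (\<exists>B. \<forall>x. \<bar>f x\<bar> \<le> B)"
  then obtain B where f: "continuous_on UNIV f" "\<And>x. \<bar>f x\<bar> \<le> B" by auto
  define T where "T (N :: 'a measure) R = (\<Sum>b\<in>Basis. \<integral>x. tail_ramp R (x \<bullet> b) \<partial>N)" for N R
  show "(\<lambda>n. \<integral>x. f x \<partial>M n) \<longlonglongrightarrow> (\<integral>x. f x \<partial>L)"
  proof (unfold tendsto_iff, intro allI impI)
    fix e :: real
    assume "e > 0"
    define d where "d = e / 5"
    have "d > 0" using \<open>e > 0\<close> by (simp add: d_def)
    have "((\<lambda>R. 2 * B * T L R) \<longlongrightarrow> 0) at_top"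
      unfolding T_def using tendsto_mult_right_zero[OF tail_integral_tendsto_0[OF L]] by simp
    then have "\<forall>\<^sub>F R in at_top. R > 0 \<and> 2 * B * T L R < d"
      using \<open>d > 0\<close> by (intro eventually_conj eventually_gt_at_top order_tendstoD(2))
    then obtain R where "R > 0" "2 * B * T L R < d"
      by (auto simp: eventually_at_top_linorder)
    obtain \<tau> where \<tau>: "trig_poly \<tau>" "\<And>x. \<bar>\<tau> x\<bar> \<le> B + d"
      and approx: "\<And>x. \<bar>f x - \<tau> x\<bar> \<le> d + 2 * B * (\<Sum>b\<in>Basis. tail_ramp R (x \<bullet> b))"
      using trig_poly_approx_tail[OF f \<open>R > 0\<close> \<open>d > 0\<close>] by blast
    have "continuous_on UNIV \<tau>"
      using trig_poly_bounded_continuous[OF \<tau>(1)] by blast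
    note error = abs_integral_diff_le_tail[OF _ f this \<tau>(2) approx, folded T_def]
    have "\<forall>\<^sub>F n in sequentially. 2 * B * T (M n) R < d"
      using tendsto_mult_left[OF tail_integral_tendsto[of R], of "2 * B"] \<open>2 * B * T L R < d\<close>
      unfolding T_def by (rule order_tendstoD(2))
    moreover have "\<forall>\<^sub>F n in sequentially. \<bar>(\<integral>x. \<tau> x \<partial>M n) - (\<integral>x. \<tau> x \<partial>L)\<bar> < d"
      using integral_trig_poly_tendsto[OF \<tau>(1)] \<open>d > 0\<close>
      unfolding tendsto_iff dist_real_def by blast
    ultimately show "\<forall>\<^sub>F n in sequentially. dist (\<integral>x. f x \<partial>M n) (\<integral>x. f x \<partial>L) < e"
    proof eventually_elim
      case (elim n)
      with error[OF M[of n]] error[OF L] \<open>2 * B * T L R < d\<close> show ?case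
        unfolding dist_real_def d_def by arith
    qed
  qed
qed

end

section \<open>Moments of a uniformly random ballot\<close>

lemma finite_rankings: "finite (rankings :: ('c::finite \<Rightarrow> nat) set)"
proof (rule finite_subset)
  show "rankings \<subseteq> PiE (UNIV::'c set) (\<lambda>_. {1..CARD('c)})"
    unfolding rankings_def by (auto simp: bij_betw_def)
qed (intro finite_PiE; simp)

lemma rankings_nonempty: "(rankings :: ('c::finite \<Rightarrow> nat) set) \<noteq> {}"
proof -
  obtain t where "bij_betw t (UNIV::'c set) {1..CARD('c)}"
    using finite_same_card_bij[of "UNIV::'c set" "{1..CARD('c)}"] by auto
  then show ?thesis unfolding rankings_def by auto
qed

lemma sum_ranking_reindex:
  "t \<in> rankings \<Longrightarrow> (\<Sum>\<alpha>\<in>UNIV. g (t (\<alpha>::'c::finite))) = (\<Sum>i=1..CARD('c). g i)"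
  unfolding rankings_def by (auto intro: sum.reindex_bij_betw)

lemma sum_rankings_comp_bij:
  assumes "bij (\<pi>::'c::finite \<Rightarrow> 'c)"
  shows "(\<Sum>t\<in>rankings. G (t \<circ> \<pi>)) = (\<Sum>t\<in>rankings. G t)"
proof (rule sum.reindex_bij_betw, rule bij_betw_byWitness[where f' = "\<lambda>t. t \<circ> inv \<pi>"])
  show "\<forall>t\<in>rankings. t \<circ> \<pi> \<circ> inv \<pi> = t" "\<forall>t\<in>rankings. t \<circ> inv \<pi> \<circ> \<pi> = t"
    using assms by (auto simp: fun_eq_iff bij_is_surj surj_f_inv_f bij_is_inj)
  show "(\<lambda>t. t \<circ> \<pi>) ` rankings \<subseteq> rankings" "(\<lambda>t. t \<circ> inv \<pi>) ` rankings \<subseteq> rankings"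
    using assms bij_imp_bij_inv unfolding rankings_def by (auto intro: bij_betw_trans)
qed

lemma sum_rankings_position:
  fixes g :: "nat \<Rightarrow> real"
  shows "(\<Sum>t\<in>rankings. g (t (\<alpha>::'c::finite)))
    = real (card (rankings :: ('c \<Rightarrow> nat) set)) / CARD('c) * (\<Sum>i=1..CARD('c). g i)"
proof -
  have same: "(\<Sum>t\<in>rankings. g (t \<beta>)) = (\<Sum>t\<in>rankings. g (t \<alpha>))" for \<beta> :: 'c
    using sum_rankings_comp_bij[OF bij_transpose[of \<beta> \<alpha>], of "\<lambda>t. g (t \<beta>)"] by simp
  have "real CARD('c) * (\<Sum>t\<in>rankings. g (t \<alpha>)) = (\<Sum>\<beta>\<in>(UNIV::'c set). \<Sum>t\<in>rankings. g (t \<alpha>))"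
    by simp
  also have "\<dots> = (\<Sum>\<beta>\<in>UNIV. \<Sum>t\<in>rankings. g (t (\<beta>::'c)))"
    by (rule sum.cong[OF refl]) (rule same[symmetric])
  also have "\<dots> = (\<Sum>t\<in>rankings. \<Sum>\<beta>\<in>UNIV. g (t (\<beta>::'c)))"
    by (rule sum.swap)
  also have "\<dots> = real (card (rankings :: ('c \<Rightarrow> nat) set)) * (\<Sum>i=1..CARD('c). g i)"
    by (simp add: sum_ranking_reindex)
  finally show ?thesis by (simp add: field_simps)
qed

lemma sum_rankings_position_pair:
  fixes g :: "nat \<Rightarrow> real"
  assumes "(\<Sum>i=1..CARD('c). g i) = 0" and "(\<alpha>::'c::finite) \<noteq> \<beta>"
  shows "(real CARD('c) - 1) * (\<Sum>t\<in>rankings. g (t \<alpha>) * g (t \<beta>)) = - (\<Sum>t\<in>rankings. (g (t \<alpha>))\<^sup>2)"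
proof -
  have same: "(\<Sum>t\<in>rankings. g (t \<alpha>) * g (t \<gamma>)) = (\<Sum>t\<in>rankings. g (t \<alpha>) * g (t \<beta>))"
    if "\<gamma> \<noteq> \<alpha>" for \<gamma>
    using sum_rankings_comp_bij[OF bij_transpose[of \<gamma> \<beta>], of "\<lambda>t. g (t \<alpha>) * g (t \<gamma>)"] that assms(2)
    by simp
  have "0 = (\<Sum>t\<in>(rankings :: ('c \<Rightarrow> nat) set). g (t \<alpha>) * (\<Sum>\<gamma>\<in>UNIV. g (t \<gamma>)))"
    using assms(1) by (simp add: sum_ranking_reindex)
  also have "\<dots> = (\<Sum>\<gamma>\<in>UNIV. \<Sum>t\<in>rankings. g (t \<alpha>) * g (t \<gamma>))"
    unfolding sum_distrib_left by (rule sum.swap)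
  also have "\<dots> = (\<Sum>t\<in>rankings. (g (t \<alpha>))\<^sup>2) + (\<Sum>\<gamma>\<in>UNIV - {\<alpha>}. \<Sum>t\<in>rankings. g (t \<alpha>) * g (t \<gamma>))"
    by (subst sum.remove[of UNIV \<alpha>]) (auto simp: power2_eq_square)
  also have "(\<Sum>\<gamma>\<in>UNIV - {\<alpha>}. \<Sum>t\<in>rankings. g (t \<alpha>) * g (t \<gamma>))
      = (real CARD('c) - 1) * (\<Sum>t\<in>rankings. g (t \<alpha>) * g (t \<beta>))"
    by (simp add: same card_Diff_singleton of_nat_diff)
  finally show ?thesis by simp
qed

lemma sum_centered_weights: "(\<Sum>i=1..m. w i - wbar w m) = 0"
  by (cases "m = 0") (simp_all add: sum_subtractf wbar_def)

lemma sum_sq_centered_weights: "(\<Sum>i=1..m. (w i - wbar w m)\<^sup>2) = real m * var_w w m"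
proof (cases "m = 0")
  case False
  have "(\<Sum>i=1..m. (w i - wbar w m)\<^sup>2)
      = (\<Sum>i=1..m. (w i)\<^sup>2) - 2 * wbar w m * (\<Sum>i=1..m. w i) + real m * (wbar w m)\<^sup>2"
    by (simp add: power2_diff sum_subtractf sum.distrib sum_distrib_left mult_ac)
  also have "(\<Sum>i=1..m. w i) = real m * wbar w m"
    using False by (simp add: wbar_def)
  finally have "(\<Sum>i=1..m. (w i - wbar w m)\<^sup>2) = (\<Sum>i=1..m. (w i)\<^sup>2) - real m * (wbar w m)\<^sup>2"
    by (simp add: power2_eq_square)
  also have "\<dots> = real m * var_w w m"
    using False by (simp add: var_w_def field_simps)
  finally show ?thesis .
qed (simp add: var_w_def wbar_def)

lemma var_w_nonneg: "0 \<le> var_w w m"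
proof (cases "m = 0")
  case False
  have "0 \<le> real m * var_w w m"
    unfolding sum_sq_centered_weights[symmetric] by (intro sum_nonneg) simp
  with False show ?thesis by (simp add: zero_le_mult_iff)
qed (simp add: var_w_def wbar_def)

definition centered_ballot :: "(nat \<Rightarrow> real) \<Rightarrow> ('c::finite \<Rightarrow> nat) \<Rightarrow> real ^ 'c" where
  "centered_ballot w t = (\<chi> \<alpha>. w (t \<alpha>) - wbar w CARD('c))"

lemma sum_rankings_centered_ballot_product:
  fixes \<alpha> \<beta> :: "'c::finite"
  defines "m \<equiv> real CARD('c)"
  assumes "CARD('c) \<ge> 2"
  shows "(\<Sum>t\<in>rankings. centered_ballot w t $ \<alpha> * centered_ballot w t $ \<beta>)
    = card (rankings :: ('c \<Rightarrow> nat) set) * (var_w w CARD('c) * (m / (m - 1)))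
        * ((if \<alpha> = \<beta> then 1 else 0) - 1 / m)"
proof -
  define d where "d i = w i - wbar w CARD('c)" for i
  define N where "N = real (card (rankings :: ('c \<Rightarrow> nat) set))"
  have "m - 1 > 0" using assms(2) by (simp add: m_def)
  have diag: "(\<Sum>t\<in>rankings. (d (t \<gamma>))\<^sup>2) = N * var_w w CARD('c)" for \<gamma> :: 'c
  proof -
    have "(\<Sum>t\<in>rankings. (d (t \<gamma>))\<^sup>2) = N / m * (\<Sum>i=1..CARD('c). (d i)\<^sup>2)"
      unfolding N_def m_def by (rule sum_rankings_position)
    then show ?thesis
      unfolding d_def sum_sq_centered_weights by (simp add: m_def)
  qed
  show ?thesis
  proof (cases "\<alpha> = \<beta>")
    case True
    then show ?thesis
      using diag[of \<alpha>] \<open>m - 1 > 0\<close>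
      by (simp add: centered_ballot_def d_def N_def power2_eq_square field_simps)
  next
    case False
    have "(m - 1) * (\<Sum>t\<in>rankings. d (t \<alpha>) * d (t \<beta>)) = - (\<Sum>t\<in>rankings. (d (t \<alpha>))\<^sup>2)"
      unfolding m_def
      by (rule sum_rankings_position_pair[OF _ False]) (unfold d_def, rule sum_centered_weights)
    also have "\<dots> = - (N * var_w w CARD('c))"
      by (simp add: diag)
    finally have "(m - 1) * (\<Sum>t\<in>rankings. d (t \<alpha>) * d (t \<beta>)) = - (N * var_w w CARD('c))" .
    with False \<open>m - 1 > 0\<close> show ?thesis
      by (simp add: centered_ballot_def d_def N_def field_simps)
  qed
qed

lemma sum_rankings_inner_centered_ballot:
  fixes u :: "real ^ 'c::finite"
  shows "(\<Sum>t\<in>rankings. u \<bullet> centered_ballot w t) = 0"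
proof -
  have "(\<Sum>t\<in>rankings. u \<bullet> centered_ballot w t)
      = (\<Sum>\<alpha>\<in>UNIV. u $ \<alpha> * (\<Sum>t\<in>rankings. w (t \<alpha>) - wbar w CARD('c)))"
    unfolding centered_ballot_def inner_vec_def sum_distrib_left
    by (simp add: sum.swap[of _ rankings])
  also have "\<dots> = 0"
    unfolding sum_rankings_position[where g = "\<lambda>i. w i - wbar w CARD('c)"] sum_centered_weights
    by simp
  finally show ?thesis .
qed

definition center :: "real ^ 'c::finite \<Rightarrow> real ^ 'c" where
  "center x = x - ((\<Sum>\<beta>\<in>UNIV. x $ \<beta>) / CARD('c)) *\<^sub>R ones"

lemma inner_center:
  fixes u x :: "real ^ 'c::finite"
  shows "u \<bullet> center x = u \<bullet> x - (\<Sum>\<alpha>\<in>UNIV. u $ \<alpha>) * (\<Sum>\<alpha>\<in>UNIV. x $ \<alpha>) / CARD('c)"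
  by (simp add: center_def ones_def inner_vec_def right_diff_distrib sum_subtractf
      sum_distrib_right flip: sum_divide_distrib)

lemma inner_center_commute:
  fixes u x :: "real ^ 'c::finite"
  shows "u \<bullet> center x = center u \<bullet> x"
  by (simp add: inner_center inner_commute mult.commute)

lemma center_center: "center (center u) = center (u :: real ^ 'c::finite)"
proof -
  have "(\<Sum>\<beta>\<in>UNIV. center u $ \<beta>) = 0"
    by (auto simp: center_def ones_def sum_subtractf)
  then show ?thesis
    by (simp add: center_def [of "center u"])
qed

lemma sum_rankings_inner_centered_ballot_sq:
  fixes u :: "real ^ 'c::finite"
  defines "m \<equiv> real CARD('c)"
  assumes "CARD('c) \<ge> 2"
  shows "(\<Sum>t\<in>rankings. (u \<bullet> centered_ballot w t)\<^sup>2)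
    = card (rankings :: ('c \<Rightarrow> nat) set) * (var_w w CARD('c) * (m / (m - 1))) * (u \<bullet> center u)"
proof -
  define K where "K = card (rankings :: ('c \<Rightarrow> nat) set) * (var_w w CARD('c) * (m / (m - 1)))"
  have "(\<Sum>t\<in>rankings. (u \<bullet> centered_ballot w t)\<^sup>2)
      = (\<Sum>t\<in>rankings. \<Sum>\<alpha>\<in>UNIV. \<Sum>\<beta>\<in>UNIV.
          u $ \<alpha> * u $ \<beta> * (centered_ballot w t $ \<alpha> * centered_ballot w t $ \<beta>))"
    by (simp add: inner_vec_def power2_eq_square sum_product algebra_simps)
  also have "\<dots> = (\<Sum>\<alpha>\<in>UNIV. \<Sum>\<beta>\<in>UNIV. u $ \<alpha> * u $ \<beta> *
      (\<Sum>t\<in>rankings. centered_ballot w t $ \<alpha> * centered_ballot w t $ \<beta>))"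
    unfolding sum_distrib_left by (subst sum.swap) (simp add: sum.swap[of _ rankings])
  also have "\<dots> = (\<Sum>\<alpha>\<in>UNIV. \<Sum>\<beta>\<in>UNIV. u $ \<alpha> * u $ \<beta> * (K * ((if \<alpha> = \<beta> then 1 else 0) - 1 / m)))"
    using assms(2) by (simp add: sum_rankings_centered_ballot_product K_def m_def)
  also have "\<dots> = (\<Sum>\<alpha>\<in>UNIV. \<Sum>\<beta>\<in>UNIV. (if \<alpha> = \<beta> then K * (u $ \<alpha>)\<^sup>2 else 0) - K / m * (u $ \<alpha> * u $ \<beta>))"
    by (intro sum.cong refl) (auto simp: power2_eq_square algebra_simps)
  also have "\<dots> = K * (\<Sum>\<alpha>\<in>UNIV. (u $ \<alpha>)\<^sup>2) - K / m * (\<Sum>\<alpha>\<in>UNIV. \<Sum>\<beta>\<in>UNIV. u $ \<alpha> * u $ \<beta>)"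
    by (simp add: sum_subtractf sum_distrib_left)
  also have "\<dots> = K * ((\<Sum>\<alpha>\<in>UNIV. (u $ \<alpha>)\<^sup>2) - (\<Sum>\<alpha>\<in>UNIV. u $ \<alpha>)\<^sup>2 / m)"
    by (simp add: power2_eq_square sum_product right_diff_distrib)
  finally show ?thesis
    unfolding inner_center by (simp add: inner_vec_def power2_eq_square K_def m_def)
qed

section \<open>Characteristic function of the scaled score\<close>

lemma IC_profile_in_rankings:
  "p \<in> set_pmf (IC_profile n) \<Longrightarrow> i < n \<Longrightarrow> p i \<in> rankings"
  unfolding IC_profile_def
  by (auto simp: set_Pi_pmf PiE_dflt_def set_pmf_of_set[OF rankings_nonempty finite_rankings])

lemma score_nth:
  assumes "\<forall>i<n. p i \<in> (rankings :: ('c::finite \<Rightarrow> nat) set)"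
  shows "score w n p $ \<alpha> = (\<Sum>i<n. w (p i \<alpha>))"
proof -
  have "score w n p $ \<alpha> = (\<Sum>t\<in>rankings. \<Sum>i\<in>{i\<in>{..<n}. p i = t}. w (t \<alpha>))"
    by (simp add: score_def N_count_def sigma_def)
  also have "\<dots> = (\<Sum>t\<in>rankings. \<Sum>i\<in>{i\<in>{..<n}. p i = t}. w (p i \<alpha>))"
    by (intro sum.cong refl) auto
  also have "\<dots> = (\<Sum>i<n. w (p i \<alpha>))"
    using assms finite_rankings by (intro sum.group) auto
  finally show ?thesis .
qed

lemma inner_scaled_score:
  assumes "\<forall>i<n. p i \<in> (rankings :: ('c::finite \<Rightarrow> nat) set)"
  shows "u \<bullet> ((1 / sqrt (real n)) *\<^sub>R (score w n p - (real n * wbar w CARD('c)) *\<^sub>R ones))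
    = (\<Sum>i<n. u \<bullet> centered_ballot w (p i)) / sqrt (real n)"
proof -
  have "u \<bullet> (score w n p - (real n * wbar w CARD('c)) *\<^sub>R ones)
      = (\<Sum>\<alpha>\<in>UNIV. \<Sum>i<n. u $ \<alpha> * (w (p i \<alpha>) - wbar w CARD('c)))"
    by (simp add: inner_vec_def score_nth[OF assms] ones_def sum_subtractf right_diff_distrib
        sum_distrib_left mult_ac)
  also have "\<dots> = (\<Sum>i<n. u \<bullet> centered_ballot w (p i))"
    unfolding centered_ballot_def inner_vec_def by (simp add: sum.swap[of _ "{..<n}"])
  finally show ?thesis
    by (simp add: inner_scaleR_right)
qed

definition ballot_law :: "(nat \<Rightarrow> real) \<Rightarrow> real ^ 'c::finite \<Rightarrow> real measure" where
  "ballot_law w u = distr (measure_pmf (pmf_of_set rankings)) borel (\<lambda>t. u \<bullet> centered_ballot w t)"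

lemma real_distribution_ballot_law: "real_distribution (ballot_law w u)"
  unfolding ballot_law_def by (intro prob_space.real_distribution_distr prob_space_measure_pmf) simp

lemma integral_ballot_law:
  fixes u :: "real ^ 'c::finite" and f :: "real \<Rightarrow> real"
  assumes "f \<in> borel_measurable borel"
  shows "integrable (ballot_law w u) f"
    and "(\<integral>x. f x \<partial>ballot_law w u)
      = (\<Sum>t\<in>rankings. f (u \<bullet> centered_ballot w t)) / card (rankings :: ('c \<Rightarrow> nat) set)"
  using assms unfolding ballot_law_def
  by (auto simp: integrable_distr_eq integral_distr rankings_nonempty finite_rankings
      integral_pmf_of_set intro!: integrable_measure_pmf_finite)

lemma IC_profile_component:
  "i < n \<Longrightarrow> map_pmf (\<lambda>p. p i) (IC_profile n) = pmf_of_set rankings"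
  unfolding IC_profile_def by (subst Pi_pmf_component) auto

lemma char_vec_scaled_score_law:
  fixes u :: "real ^ 'c::finite"
  shows "char_vec (scaled_score_law w n) u = char (ballot_law w u) (1 / sqrt (real n)) ^ n"
proof -
  define IC where "IC = measure_pmf (IC_profile n :: (nat \<Rightarrow> 'c \<Rightarrow> nat) pmf)"
  interpret IC: prob_space IC unfolding IC_def by (rule prob_space_measure_pmf)
  define X where "X i p = u \<bullet> centered_ballot w (p i) / sqrt (real n)"
    for i and p :: "nat \<Rightarrow> 'c \<Rightarrow> nat"
  have "char_vec (scaled_score_law w n) u = (CLINT p|IC. iexp (\<Sum>i<n. X i p))"
    unfolding char_vec_def scaled_score_law_def integral_map_pmf IC_def
  proof (intro integral_cong_AE AE_pmfI)
    fix p assume "p \<in> set_pmf (IC_profile n :: (nat \<Rightarrow> 'c \<Rightarrow> nat) pmf)"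
    then have "u \<bullet> ((1 / sqrt (real n)) *\<^sub>R (score w n p - (real n * wbar w CARD('c)) *\<^sub>R ones))
        = (\<Sum>i<n. X i p)"
      using IC_profile_in_rankings inner_scaled_score unfolding X_def sum_divide_distrib by blast
    then show "iexp (u \<bullet> ((1 / sqrt (real n)) *\<^sub>R
        (score w n p - (real n * wbar w CARD('c)) *\<^sub>R ones))) = iexp (\<Sum>i<n. X i p)"
      by simp
  qed simp_all
  also have "\<dots> = char (distr IC borel (\<lambda>p. \<Sum>i<n. X i p)) 1"
    unfolding char_def by (simp add: integral_distr IC_def)
  also have "\<dots> = (\<Prod>i<n. char (distr IC borel (X i)) 1)"
  proof (rule IC.char_distr_sum)
    have "IC.indep_vars (\<lambda>_. count_space UNIV) (\<lambda>i p. p i) {..<n}"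
      unfolding IC_def IC_profile_def by (rule indep_vars_Pi_pmf) simp
    then show "IC.indep_vars (\<lambda>i. borel) X {..<n}"
      unfolding X_def by (rule IC.indep_vars_compose2) simp
  qed
  also have "\<dots> = (\<Prod>i<n. char (ballot_law w u) (1 / sqrt (real n)))"
  proof (intro prod.cong refl)
    fix i assume "i \<in> {..<n}"
    have "char (distr IC borel (X i)) 1
        = (CLINT t|map_pmf (\<lambda>p. p i) (IC_profile n).
            iexp (u \<bullet> centered_ballot w t / sqrt (real n)))"
      by (simp add: char_def integral_distr IC_def X_def)
    also have "map_pmf (\<lambda>p. p i) (IC_profile n :: (nat \<Rightarrow> 'c \<Rightarrow> nat) pmf) = pmf_of_set rankings"
      using \<open>i \<in> {..<n}\<close> by (simp add: IC_profile_component)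
    finally show "char (distr IC borel (X i)) 1 = char (ballot_law w u) (1 / sqrt (real n))"
      by (simp add: char_def ballot_law_def integral_distr)
  qed
  finally show ?thesis by simp
qed

text \<open>The estimate inside the proof of the library's central_limit_theorem_zero_mean, which
  is not available there as a lemma.\<close>

lemma (in real_distribution) norm_char_power_sub_le:
  assumes "integrable M (\<lambda>x. x)" "expectation (\<lambda>x. x) = 0"
    and "integrable M (\<lambda>x. x\<^sup>2)" "expectation (\<lambda>x. x\<^sup>2) = s"
    and "n > 0" "s \<le> 4 * real n"
  shows "cmod (char M (1 / sqrt (real n)) ^ n - (1 + (- s / 2) / n) ^ n)
    \<le> 1 / 6 * expectation (\<lambda>x. min (6 * x\<^sup>2) (\<bar>1 / sqrt (real n)\<bar> * \<bar>x\<bar> ^ 3))"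
proof -
  let ?t = "1 / sqrt (real n)"
  have "s \<ge> 0"
    unfolding assms(4)[symmetric] by (rule integral_nonneg_AE) simp
  have "cmod (char M ?t - (1 - ?t\<^sup>2 * s / 2))
      \<le> ?t\<^sup>2 / 6 * expectation (\<lambda>x. min (6 * x\<^sup>2) (\<bar>?t\<bar> * \<bar>x\<bar> ^ 3))"
    using assms(1-4) by (intro char_approx3) simp_all
  also have "?t\<^sup>2 = 1 / n"
    using assms(5) by (simp add: power_divide)
  finally have approx: "cmod (char M ?t - complex_of_real (1 + (- s / 2) / n))
      \<le> 1 / (6 * n) * expectation (\<lambda>x. min (6 * x\<^sup>2) (\<bar>?t\<bar> * \<bar>x\<bar> ^ 3))"
    by (simp add: field_simps)
  have "\<bar>1 + (- s / 2) / n\<bar> \<le> 1"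
    using assms(5,6) \<open>s \<ge> 0\<close> by (simp add: abs_le_iff field_simps)
  then have "norm (complex_of_real (1 + (- s / 2) / n)) \<le> 1"
    by (simp only: norm_of_real)
  then have "cmod (char M ?t ^ n - complex_of_real (1 + (- s / 2) / n) ^ n)
      \<le> n * cmod (char M ?t - complex_of_real (1 + (- s / 2) / n))"
    by (intro norm_power_diff cmod_char_le_1)
  also have "\<dots> \<le> n * (1 / (6 * n) * expectation (\<lambda>x. min (6 * x\<^sup>2) (\<bar>?t\<bar> * \<bar>x\<bar> ^ 3)))"
    by (rule mult_left_mono[OF approx]) simp
  also have "\<dots> = 1 / 6 * expectation (\<lambda>x. min (6 * x\<^sup>2) (\<bar>?t\<bar> * \<bar>x\<bar> ^ 3))"
    using assms(5) by simp
  finally show ?thesis by simp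
qed

lemma (in real_distribution) char_power_tendsto:
  assumes "integrable M (\<lambda>x. x)" "expectation (\<lambda>x. x) = 0"
    and "integrable M (\<lambda>x. x\<^sup>2)" "expectation (\<lambda>x. x\<^sup>2) = s"
  shows "(\<lambda>n. char M (1 / sqrt (real n)) ^ n) \<longlonglongrightarrow> complex_of_real (exp (- s / 2))"
proof -
  define E where "E n = expectation (\<lambda>x. min (6 * x\<^sup>2) (\<bar>1 / sqrt (real n)\<bar> * \<bar>x\<bar> ^ 3))"
    for n :: nat
  have close: "\<forall>\<^sub>F n in sequentially.
      cmod (char M (1 / sqrt (real n)) ^ n - (1 + (- s / 2) / n) ^ n) \<le> 1 / 6 * E n"
    using eventually_ge_at_top[of "nat \<lceil>s / 4\<rceil> + 1"]
  proof eventually_elim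
    case (elim n)
    have "real (nat \<lceil>s / 4\<rceil>) \<le> real n"
      using elim by (intro of_nat_mono) linarith
    then have "s \<le> 4 * real n"
      using real_nat_ceiling_ge[of "s / 4"] by linarith
    with elim show ?case
      unfolding E_def by (intro norm_char_power_sub_le[OF assms]) simp_all
  qed
  have "(\<lambda>n. 1 / 6 * E n) \<longlonglongrightarrow> 1 / 6 * (\<integral>x. 0 \<partial>M)"
    unfolding E_def
  proof (intro tendsto_mult_left integral_dominated_convergence[where w = "\<lambda>x. 6 * x\<^sup>2"] AE_I2)
    have "(\<lambda>n. 1 / sqrt (real n)) \<longlonglongrightarrow> 0"
      by (intro tendsto_divide_0[OF tendsto_const] filterlim_at_top_imp_at_infinity
          filterlim_compose[OF sqrt_at_top filterlim_real_sequentially])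
    then have "(\<lambda>n. \<bar>1 / sqrt (real n)\<bar> * \<bar>x\<bar> ^ 3) \<longlonglongrightarrow> 0 * \<bar>x\<bar> ^ 3" for x :: real
      by (intro tendsto_mult tendsto_const tendsto_rabs_zero)
    then show "(\<lambda>n. min (6 * x\<^sup>2) (\<bar>1 / sqrt (real n)\<bar> * \<bar>x\<bar> ^ 3)) \<longlonglongrightarrow> 0" for x :: real
      using tendsto_min[OF tendsto_const, of _ 0 sequentially "6 * x\<^sup>2"] by simp
  qed (use assms(3) in auto)
  then have error: "(\<lambda>n. 1 / 6 * E n) \<longlonglongrightarrow> 0"
    by simp
  have "(\<lambda>n. complex_of_real ((1 + (- s / 2) / n) ^ n)) \<longlonglongrightarrow> complex_of_real (exp (- s / 2))"
    by (intro tendsto_of_real tendsto_exp_limit_sequentially)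
  then show ?thesis
    by (rule Lim_transform) (use Lim_null_comparison[OF close error] in simp)
qed

section \<open>The Gaussian limit\<close>

lemma borel_measurable_vec_lambda_std_normal_vec:
  "(\<lambda>Z. \<chi> \<alpha>. Z \<alpha>) \<in> borel_measurable (std_normal_vec :: ('c::finite \<Rightarrow> real) measure)"
proof (subst borel_measurable_euclidean_space, intro ballI)
  fix b :: "real ^ 'c"
  assume "b \<in> Basis"
  then obtain i where "b = axis i 1" by (auto simp: Basis_vec_def)
  then show "(\<lambda>Z. (\<chi> \<alpha>. Z \<alpha>) \<bullet> b) \<in> borel_measurable std_normal_vec"
    unfolding std_normal_vec_def by (simp add: inner_axis) measurable
qed

lemma limit_law_eq_distr_center:
  "limit_law w = distr std_normal_vec borel
     (\<lambda>Z. (sqrt (var_w w CARD('c)) * sqrt (real CARD('c) / (real CARD('c) - 1))) *\<^sub>R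
       center (\<chi> \<alpha>. Z \<alpha>) :: real ^ 'c::finite)"
  by (simp add: limit_law_def center_def)

lemma borel_measurable_limit_map:
  "(\<lambda>Z. a *\<^sub>R center (\<chi> \<alpha>. Z \<alpha>)) \<in> borel_measurable (std_normal_vec :: ('c::finite \<Rightarrow> real) measure)"
proof -
  have "continuous_on UNIV (\<lambda>x :: real ^ 'c. a *\<^sub>R center x)"
    unfolding center_def by (intro continuous_intros) auto
  then show ?thesis
    by (intro measurable_compose[OF borel_measurable_vec_lambda_std_normal_vec]
        borel_measurable_continuous_onI)
qed

lemma borel_prob_space_limit_law: "borel_prob_space (limit_law w :: (real ^ 'c::finite) measure)"
  unfolding limit_law_eq_distr_center
  by (intro prob_space.borel_prob_space_distr borel_measurable_limit_map)
    (auto simp: std_normal_vec_def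
      intro: prob_space_PiM real_distribution.axioms(1) real_dist_normal_dist)

lemma char_vec_limit_law:
  fixes u :: "real ^ 'c::finite"
  defines "m \<equiv> real CARD('c)"
  assumes "CARD('c) \<ge> 2"
  shows "char_vec (limit_law w) u = exp (- (var_w w CARD('c) * (m / (m - 1)) * (u \<bullet> center u)) / 2)"
proof -
  define \<kappa> where "\<kappa> = sqrt (var_w w CARD('c)) * sqrt (m / (m - 1))"
  define c where "c \<alpha> = \<kappa> * center u $ \<alpha>" for \<alpha>
  have "\<kappa>\<^sup>2 = var_w w CARD('c) * (m / (m - 1))"
    using var_w_nonneg[of w "CARD('c)"] assms(2) by (simp add: \<kappa>_def m_def power_mult_distrib)
  moreover have "(\<Sum>\<alpha>\<in>UNIV. (c \<alpha>)\<^sup>2) = \<kappa>\<^sup>2 * (center u \<bullet> center u)"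
    by (simp add: c_def power_mult_distrib inner_vec_def power2_eq_square sum_distrib_left mult_ac)
  moreover have "center u \<bullet> center u = u \<bullet> center u"
    by (simp add: inner_center_commute center_center)
  ultimately have c_sq: "(\<Sum>\<alpha>\<in>UNIV. (c \<alpha>)\<^sup>2) = var_w w CARD('c) * (m / (m - 1)) * (u \<bullet> center u)"
    by simp
  interpret P: product_prob_space "\<lambda>_::'c. std_normal_distribution"
    by (intro product_prob_spaceI real_distribution.axioms(1) real_dist_normal_dist)
  have "char_vec (limit_law w) u = (CLINT Z|std_normal_vec. iexp (u \<bullet> (\<kappa> *\<^sub>R center (\<chi> \<alpha>. Z \<alpha>))))"
    unfolding char_vec_def limit_law_eq_distr_center \<kappa>_def m_def
    by (rule integral_distr[OF borel_measurable_limit_map]) measurable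
  also have "\<dots> = (CLINT Z|std_normal_vec. (\<Prod>\<alpha>\<in>UNIV. iexp (c \<alpha> * Z \<alpha>)))"
    unfolding inner_scaleR_right inner_center_commute
    by (simp add: c_def inner_vec_def exp_sum[symmetric] sum_distrib_left mult_ac)
  also have "\<dots> = (\<Prod>\<alpha>\<in>UNIV. CLINT x|std_normal_distribution. iexp (c \<alpha> * x))"
    unfolding std_normal_vec_def
    by (rule P.product_integral_prod[where f = "\<lambda>\<alpha> x. iexp (c \<alpha> * x)"])
      (auto intro!: prob_space.integrable_iexp real_distribution.axioms(1) real_dist_normal_dist)
  also have "\<dots> = (\<Prod>\<alpha>\<in>UNIV. complex_of_real (exp (- (c \<alpha>)\<^sup>2 / 2)))"
    using char_std_normal_distribution unfolding char_def by (simp add: fun_eq_iff)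
  also have "\<dots> = exp (- (\<Sum>\<alpha>\<in>UNIV. (c \<alpha>)\<^sup>2) / 2)"
    by (simp add: exp_sum sum_divide_distrib flip: of_real_prod sum_negf)
  finally show ?thesis
    unfolding c_sq .
qed

lemma char_vec_scaled_score_law_tendsto:
  fixes u :: "real ^ 'c::finite"
  assumes "CARD('c) \<ge> 2"
  shows "(\<lambda>n. char_vec (scaled_score_law w n) u) \<longlonglongrightarrow> char_vec (limit_law w) u"
proof -
  interpret real_distribution "ballot_law w u"
    by (rule real_distribution_ballot_law)
  have "card (rankings :: ('c \<Rightarrow> nat) set) > 0"
    using finite_rankings rankings_nonempty by (simp add: card_gt_0_iff)
  then have "expectation (\<lambda>x. x\<^sup>2)
      = var_w w CARD('c) * (real CARD('c) / (real CARD('c) - 1)) * (u \<bullet> center u)"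
    using assms by (simp add: integral_ballot_law sum_rankings_inner_centered_ballot_sq)
  moreover have "expectation (\<lambda>x. x) = 0"
    by (simp add: integral_ballot_law sum_rankings_inner_centered_ballot)
  ultimately show ?thesis
    unfolding char_vec_scaled_score_law char_vec_limit_law[OF assms]
    by (intro char_power_tendsto) (simp_all add: integral_ballot_law)
qed

theorem proposition2:
  fixes w :: "nat \<Rightarrow> real"
  assumes "CARD('c::finite) \<ge> 3"
    and "w 1 = 1" and "w CARD('c) = 0"
    and "\<And>i j. 1 \<le> i \<Longrightarrow> i \<le> j \<Longrightarrow> j \<le> CARD('c) \<Longrightarrow> w j \<le> w i"
  shows "conv_in_distr (\<lambda>n. scaled_score_law w n :: (real ^ 'c) measure) (limit_law w)"
proof (rule levy_continuity_multivariate)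
  show "borel_prob_space (scaled_score_law w n :: (real ^ 'c) measure)" for n
    unfolding scaled_score_law_def by (rule borel_prob_space_measure_pmf)
  show "borel_prob_space (limit_law w :: (real ^ 'c) measure)"
    by (rule borel_prob_space_limit_law)
  show "(\<lambda>n. char_vec (scaled_score_law w n) u) \<longlonglongrightarrow> char_vec (limit_law w) u" for u :: "real ^ 'c"
    using assms(1) by (intro char_vec_scaled_score_law_tendsto) simp
qed

end
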